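(* Let $S$ be a monoid such that the word $xyyx$ is an isoterm for $S$. Let $\mathbf u$ be a word and $x,y\in\mathrm{con}(\mathbf u)$ distinct variables such that: (i) each of $x,y$ occurs at most twice in $\mathbf u$; (ii) ${}_{1\mathbf u}x<_{\mathbf u}{}_{1\mathbf u}y$; (iii) if both $x$ and $y$ occur twice in $\mathbf u$, then $\mathbf u$ contains a linear variable $t$ with ${}_{1\mathbf u}y<_{\mathbf u}{}_{\mathbf u}t<_{\mathbf u}{}_{2\mathbf u}y$ and ${}_{2\mathbf u}x<_{\mathbf u}{}_{\mathbf u}t<_{\mathbf u}{}_{2\mathbf u}y$. Then the set $\{{}_{1\mathbf u}x,{}_{1\mathbf u}y\}$ is stable in $\mathbf u$ with respect to $S$.
   Context: Variables are letters of a countably infinite alphabet; words are elements of the free semigroup on it. A monoid $S$ satisfies $\mathbf u\approx\mathbf v$ if both sides are equal under every evaluation of variables in $S$. A word $\mathbf w$ is an isoterm for $S$ if $S$ satisfies no identity $\mathbf w\approx\mathbf w'$ with $\mathbf w'\ne\mathbf w$. $\mathrm{occ}_{\mathbf u}(x)$ is the number of occurrences of $x$ in $\mathbf u$, $\mathrm{con}(\mathbf u)$ the set of variables occurring in $\mathbf u$; $t$ is linear in $\mathbf u$ if it occurs exactly once, ${}_{\mathbf u}t$ denoting that occurrence. ${}_{i\mathbf u}x$ is the $i$-th occurrence of $x$ in $\mathbf u$; $<_{\mathbf u}$ is the order of occurrences by position. $l_{\mathbf u,\mathbf v}$ maps ${}_{i\mathbf u}x\mapsto{}_{i\mathbf v}x$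 for $i\le\min(\mathrm{occ}_{\mathbf u}(x),\mathrm{occ}_{\mathbf v}(x))$. A set $X$ of occurrences in $\mathbf u$ is stable in $\mathbf u$ with respect to $S$ if for every identity $\mathbf u\approx\mathbf v$ satisfied by $S$: each variable having an occurrence in $X$ occurs the same number of times in $\mathbf u$ and $\mathbf v$, and $l_{\mathbf u,\mathbf v}$ is defined on $X$ and is an order isomorphism from $(X,<_{\mathbf u})$ onto $(l_{\mathbf u,\mathbf v}(X),<_{\mathbf v})$. *)

theory Defs
  imports Main
begin

text \<open>Variables are natural numbers (a countably infinite alphabet); words are
nonempty lists of variables (elements of the free semigroup). A monoid is a
type of class monoid_mult.\<close>

type_synonym word = "nat list"

definition is_word :: "word \<Rightarrow> bool" where
  "is_word w \<longleftrightarrow> w \<noteq> []"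

definition eval_word :: "(nat \<Rightarrow> 'a::monoid_mult) \<Rightarrow> word \<Rightarrow> 'a" where
  "eval_word \<phi> w = prod_list (map \<phi> w)"

definition satisfies :: "'a::monoid_mult itself \<Rightarrow> word \<Rightarrow> word \<Rightarrow> bool" where
  "satisfies S u v \<longleftrightarrow> (\<forall>\<phi> :: nat \<Rightarrow> 'a. eval_word \<phi> u = eval_word \<phi> v)"

definition isoterm :: "'a::monoid_mult itself \<Rightarrow> word \<Rightarrow> bool" where
  "isoterm S w \<longleftrightarrow> (\<forall>w'. is_word w' \<and> satisfies S w w' \<longrightarrow> w' = w)"

definition occ :: "word \<Rightarrow> nat \<Rightarrow> nat" where
  "occ u x = length (filter (\<lambda>z. z = x) u)"

definition con :: "word \<Rightarrow> nat set" where
  "con u = set u"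

text \<open>An occurrence is a pair (x, i): the i-th occurrence of x (i \<ge> 1).
occ_pos u (x,i) is the list position of the i-th occurrence of x in u.\<close>
definition occ_pos :: "word \<Rightarrow> nat \<times> nat \<Rightarrow> nat" where
  "occ_pos u p = filter (\<lambda>j. u ! j = fst p) [0..<length u] ! (snd p - 1)"

definition is_occurrence :: "word \<Rightarrow> nat \<times> nat \<Rightarrow> bool" where
  "is_occurrence u p \<longleftrightarrow> 1 \<le> snd p \<and> snd p \<le> occ u (fst p)"

definition occ_less :: "word \<Rightarrow> nat \<times> nat \<Rightarrow> nat \<times> nat \<Rightarrow> bool" where
  "occ_less u p q \<longleftrightarrow> occ_pos u p < occ_pos u q"

text \<open>l_{u,v} maps (x,i) in u to (x,i) in v, defined when i \<le> occ_v(x).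
Stability of a set X of occurrences of u with respect to S.\<close>
definition stable :: "'a::monoid_mult itself \<Rightarrow> word \<Rightarrow> (nat \<times> nat) set \<Rightarrow> bool" where
  "stable S u X \<longleftrightarrow>
     (\<forall>v. is_word v \<and> satisfies S u v \<longrightarrow>
        (\<forall>p\<in>X. occ u (fst p) = occ v (fst p)) \<and>
        (\<forall>p\<in>X. is_occurrence v p) \<and>
        (\<forall>p\<in>X. \<forall>q\<in>X. occ_less u p q \<longleftrightarrow> occ_less v p q))"

end

theory Submission
  imports Defs
begin

(*
  Since S is a monoid, an identity u = v of S survives substituting (possibly empty) words
  for letters and multiplying both sides by the same context; whenever this turns u into
  xyyx, the isoterm property forces v to become xyyx too. Deleting all letters but two
  is such a substitution. If x and y do not both occur twice, the restriction of u to
  {x, y} is xy, xyy, xxy or xyx, each of which is carried onto xyyx (for xyx via y -> yy),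
  so v has the same restriction. If both occur twice, the linear letter t forces the
  restrictions of u to {y, t} and {x, t} to be yty and xxt; these pass to v, and then
  the only way for y to come first in v is the restriction yxxy, which already is xyyx
  and would pass back to u.
*)

lemma occ_simps [simp]:
  "occ [] z = 0" "occ (a # w) z = (if a = z then Suc (occ w z) else occ w z)"
  "occ (w @ w') z = occ w z + occ w' z"
  by (simp_all add: occ_def)

lemma occ_gt_0_iff: "0 < occ w z \<longleftrightarrow> z \<in> set w"
  by (induction w) auto

lemma length_eq_occ_sum: "set w \<subseteq> {a, b} \<Longrightarrow> a \<noteq> b \<Longrightarrow> length w = occ w a + occ w b"
  by (induction w) auto

definition proj :: "nat set \<Rightarrow> word \<Rightarrow> word" where
  "proj A w = filter (\<lambda>z. z \<in> A) w"

lemma proj_simps [simp]: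
  "proj A [] = []" "proj A (a # w) = (if a \<in> A then a # proj A w else proj A w)"
  "proj A (w @ w') = proj A w @ proj A w'"
  by (simp_all add: proj_def)

lemma set_proj [simp]: "set (proj A w) = set w \<inter> A"
  by (auto simp: proj_def)

lemma occ_proj: "occ (proj A w) z = (if z \<in> A then occ w z else 0)"
  by (induction w) auto

lemma proj_id: "set w \<subseteq> A \<Longrightarrow> proj A w = w"
  by (simp add: proj_def subset_code(1))

lemma proj_eq_replicate:
  assumes "a \<in> A" and "\<And>z. z \<in> set w \<Longrightarrow> z \<in> A \<Longrightarrow> z = a"
  shows "proj A w = replicate (occ w a) a"
proof -
  have "proj A w = filter (\<lambda>z. z = a) w"
    unfolding proj_def using assms by (auto intro: filter_cong)
  also have "\<dots> = replicate (occ w a) a"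
    by (induction w) simp_all
  finally show ?thesis .
qed

lemma occ_positions_append:
  "filter (\<lambda>j. (w @ w') ! j = z) [0..<length (w @ w')]
   = filter (\<lambda>j. w ! j = z) [0..<length w] @ map ((+) (length w)) (filter (\<lambda>j. w' ! j = z) [0..<length w'])"
proof -
  have "[0..<length (w @ w')] = [0..<length w] @ map ((+) (length w)) [0..<length w']"
    by (simp add: upt_add_eq_append[of 0 "length w" "length w'", simplified])
      (induction w', simp_all)
  moreover have "filter (\<lambda>j. (w @ w') ! j = z) [0..<length w] = filter (\<lambda>j. w ! j = z) [0..<length w]"
    by (rule filter_cong) (simp_all add: nth_append)
  ultimately show ?thesis
    by (simp add: filter_map o_def)
qed

lemma length_occ_positions: "length (filter (\<lambda>j. w ! j = z) [0..<length w]) = occ w z"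
proof (induction w rule: rev_induct)
  case (snoc c w)
  have "filter (\<lambda>j. [c] ! j = z) [0..<length [c]] = (if c = z then [0] else [])"
    by simp
  with snoc.IH show ?case
    unfolding occ_positions_append by simp
qed simp

lemma occ_pos_append:
  assumes "1 \<le> i" "i \<le> occ (w @ w') z"
  shows "occ_pos (w @ w') (z, i) =
    (if i \<le> occ w z then occ_pos w (z, i) else length w + occ_pos w' (z, i - occ w z))"
  using assms unfolding occ_pos_def occ_positions_append
  by (auto simp: nth_append length_occ_positions)

lemma occ_pos_nth:
  assumes "1 \<le> i" "i \<le> occ w z"
  shows "occ_pos w (z, i) < length w" and "w ! occ_pos w (z, i) = z"
proof -
  have "occ_pos w (z, i) \<in> set (filter (\<lambda>j. w ! j = z) [0..<length w])"
    unfolding occ_pos_def fst_conv snd_conv by (rule nth_mem) (use assms in \<open>simp add: length_occ_positions\<close>)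
  then show "occ_pos w (z, i) < length w" and "w ! occ_pos w (z, i) = z"
    by auto
qed

lemma occ_pos_Cons_first:
  assumes "z \<in> set (c # w)"
  shows "occ_pos (c # w) (z, 1) = (if c = z then 0 else Suc (occ_pos w (z, 1)))"
proof -
  have "1 \<le> occ ([c] @ w) z"
    using assms occ_gt_0_iff[of "c # w" z] by simp
  then show ?thesis
    using assms occ_pos_append[of 1 "[c]" w z] by (auto simp: occ_pos_def)
qed

lemma occ_pos_less_length_iff:
  assumes "1 \<le> i" "i \<le> occ (w @ w') z"
  shows "occ_pos (w @ w') (z, i) < length w \<longleftrightarrow> i \<le> occ w z"
  using assms occ_pos_nth(1)[of i w z] by (simp add: occ_pos_append)

lemma occ_less_first_iff_hd_proj:
  assumes "x \<noteq> y" "x \<in> set w" "y \<in> set w"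
  shows "occ_less w (x, 1) (y, 1) \<longleftrightarrow> hd (proj {x, y} w) = x"
  using assms
proof (induction w)
  case (Cons c w)
  show ?case
  proof (cases "c \<in> {x, y}")
    case True
    then show ?thesis
      using Cons.prems occ_pos_Cons_first[of x c w] occ_pos_Cons_first[of y c w]
      by (auto simp: occ_less_def)
  next
    case False
    with Cons.prems have "x \<in> set w" "y \<in> set w"
      by auto
    with False Cons.IH Cons.prems show ?thesis
      using occ_pos_Cons_first[of x c w] occ_pos_Cons_first[of y c w]
      by (simp add: occ_less_def)
  qed
qed simp

lemma occ_less_linear:
  assumes u: "u = u1 @ t # u2" and "t \<notin> set u1" "z \<noteq> t" "1 \<le> i" "i \<le> occ u z"
  shows "occ_less u (z, i) (t, 1) \<longleftrightarrow> i \<le> occ u1 z"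
    and "occ_less u (t, 1) (z, i) \<longleftrightarrow> occ u1 z < i"
proof -
  have "occ u1 t = 0"
    using \<open>t \<notin> set u1\<close> occ_gt_0_iff[of u1 t] by simp
  then have t: "occ_pos u (t, 1) = length u1"
    using u occ_pos_append[of 1 u1 "t # u2" t] occ_pos_Cons_first[of t t u2] by simp
  have "u ! occ_pos u (z, i) = z"
    using assms by (simp add: occ_pos_nth)
  then have "occ_pos u (z, i) \<noteq> length u1"
    using u \<open>z \<noteq> t\<close> by auto
  moreover have "occ_pos u (z, i) < length u1 \<longleftrightarrow> i \<le> occ u1 z"
    using occ_pos_less_length_iff[of i u1 "t # u2" z] assms(4,5) unfolding u by blast
  ultimately show "occ_less u (z, i) (t, 1) \<longleftrightarrow> i \<le> occ u1 z"
    and "occ_less u (t, 1) (z, i) \<longleftrightarrow> occ u1 z < i"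
    unfolding occ_less_def t by auto
qed

definition subst :: "(nat \<Rightarrow> word) \<Rightarrow> word \<Rightarrow> word" where
  "subst \<sigma> w = concat (map \<sigma> w)"

lemma subst_simps [simp]:
  "subst \<sigma> [] = []" "subst \<sigma> (a # w) = \<sigma> a @ subst \<sigma> w" "subst \<sigma> (w @ w') = subst \<sigma> w @ subst \<sigma> w'"
  by (simp_all add: subst_def)

lemma subst_proj: "(\<And>z. z \<notin> A \<Longrightarrow> \<sigma> z = []) \<Longrightarrow> subst \<sigma> w = subst \<sigma> (proj A w)"
  by (induction w) auto

lemma subst_letters_proj: "subst (\<lambda>z. if z \<in> A then [g z] else []) (proj A w) = map g (proj A w)"
  by (induction w) auto

lemma eval_word_simps [simp]:
  "eval_word \<phi> [] = 1" "eval_word \<phi> (a # w) = \<phi> a * eval_word \<phi> w"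
  "eval_word \<phi> (w @ w') = eval_word \<phi> w * eval_word \<phi> w'"
  by (simp_all add: eval_word_def)

lemma eval_word_subst: "eval_word \<phi> (subst \<sigma> w) = eval_word (\<lambda>z. eval_word \<phi> (\<sigma> z)) w"
  by (induction w) simp_all

lemma satisfies_subst: "satisfies S u v \<Longrightarrow> satisfies S (subst \<sigma> u) (subst \<sigma> v)"
  by (simp add: satisfies_def eval_word_subst)

lemma satisfies_context: "satisfies S u v \<Longrightarrow> satisfies S (p @ u @ q) (p @ v @ q)"
  by (simp add: satisfies_def)

lemma satisfies_sym: "satisfies S u v \<Longrightarrow> satisfies S v u"
  by (simp add: satisfies_def)

lemma isoterm_satisfies_eq:
  assumes iso: "isoterm S W" and "W \<noteq> []" and sat: "satisfies S W w"
  shows "w = W"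
proof (cases "w = []")
  case True
  \<comment> \<open>\<open>isoterm\<close> only constrains nonempty words, but \<open>W = []\<close> would entail \<open>W = W W\<close>\<close>
  then have "satisfies S W (W @ W)"
    using sat by (simp add: satisfies_def)
  then have "W @ W = W"
    using iso \<open>W \<noteq> []\<close> by (auto simp: isoterm_def is_word_def)
  with \<open>W \<noteq> []\<close> show ?thesis by simp
qed (use iso sat in \<open>auto simp: isoterm_def is_word_def\<close>)

lemma isoterm_transfer:
  assumes "isoterm S W" "W \<noteq> []" "satisfies S u v" and "p @ subst \<sigma> u @ q = W"
  shows "p @ subst \<sigma> v @ q = W"
  using assms isoterm_satisfies_eq satisfies_context satisfies_subst by metis

lemma isoterm_transfer_proj:
  assumes "isoterm S W" "W \<noteq> []" "satisfies S u v" "\<And>z. z \<notin> A \<Longrightarrow> \<sigma> z = []"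
    and "p @ subst \<sigma> (proj A u) @ q = W"
  shows "p @ subst \<sigma> (proj A v) @ q = W"
  using assms isoterm_transfer[of S W u v p \<sigma> q] subst_proj[of A \<sigma>] by metis

lemma aba_if_subst_0_11:
  assumes "a \<noteq> b" "set w \<subseteq> {a, b}"
    and "subst (\<lambda>z. if z = a then [0] else if z = b then [1, 1] else []) w = [0, 1, 1, 0]"
  shows "w = [a, b, a]"
proof -
  let ?\<sigma> = "\<lambda>z. if z = a then [0::nat] else if z = b then [1, 1] else []"
  have letter: "c = a \<or> c = b" if "c \<in> set w" for c
    using assms(2) that by blast
  obtain c w1 where w: "w = c # w1"
    using assms(3) by (cases w) auto
  with assms(3) letter have "c = a" and w1: "subst ?\<sigma> w1 = [1, 1, 0]"
    by (auto split: if_splits)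
  obtain d w2 where w1': "w1 = d # w2"
    using w1 by (cases w1) auto
  with w1 letter w assms(1) have "d = b" and w2: "subst ?\<sigma> w2 = [0]"
    by (auto split: if_splits)
  obtain e w3 where w2': "w2 = e # w3"
    using w2 by (cases w2) auto
  with w2 letter w w1' have "e = a" and "subst ?\<sigma> w3 = []"
    by (auto split: if_splits)
  moreover have "w3 = []"
    using \<open>subst ?\<sigma> w3 = []\<close> letter w w1' w2' by (cases w3) (auto split: if_splits)
  ultimately show ?thesis
    using w w1' w2' \<open>c = a\<close> \<open>d = b\<close> by simp
qed

lemma proj_eq_if_rigid:
  fixes S :: "'a::monoid_mult itself"
  assumes iso: "isoterm S [0, 1, 1, 0]" and sat: "satisfies S u v" and "a \<noteq> b"
    and rigid: "proj {a, b} u \<in> {[a, b], [a, b, b], [a, a, b], [a, b, a], [a, b, b, a]}"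
  shows "proj {a, b} v = proj {a, b} u"
proof -
  let ?A = "{a, b}"
  have transfer: "p @ subst \<sigma> (proj ?A v) @ q = [0, 1, 1, 0]"
    if "p @ subst \<sigma> (proj ?A u) @ q = [0, 1, 1, 0]" "\<And>z. z \<notin> ?A \<Longrightarrow> \<sigma> z = []" for p \<sigma> q
    using isoterm_transfer_proj[OF iso _ sat, of ?A \<sigma> p q] that by simp
  have by_letters: "proj ?A v = proj ?A u"
    if "p @ map g (proj ?A u) @ q = [0, 1, 1, 0]" "g a \<noteq> g b" for p q and g :: "nat \<Rightarrow> nat"
  proof (rule map_inj_on)
    have "p @ map g (proj ?A v) @ q = [0, 1, 1, 0]"
      using transfer[of p "\<lambda>z. if z \<in> ?A then [g z] else []" q] that(1)
      unfolding subst_letters_proj by auto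
    with that(1) show "map g (proj ?A v) = map g (proj ?A u)"
      by (metis append_same_eq same_append_eq)
    show "inj_on g (set (proj ?A v) \<union> set (proj ?A u))"
      using that(2) by (auto simp: inj_on_def)
  qed
  from rigid show ?thesis
  proof (elim insertE emptyE)
    assume "proj ?A u = [a, b]"
    then show ?thesis
      by (intro by_letters[of "[]" "\<lambda>z. if z = a then 0 else 1" "[1, 0]"]) (use \<open>a \<noteq> b\<close> in simp_all)
  next
    assume "proj ?A u = [a, b, b]"
    then show ?thesis
      by (intro by_letters[of "[]" "\<lambda>z. if z = a then 0 else 1" "[0]"]) (use \<open>a \<noteq> b\<close> in simp_all)
  next
    assume "proj ?A u = [a, a, b]"
    then show ?thesis
      by (intro by_letters[of "[0]" "\<lambda>z. if z = a then 1 else 0" "[]"]) (use \<open>a \<noteq> b\<close> in simp_all)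
  next
    assume "proj ?A u = [a, b, b, a]"
    then show ?thesis
      by (intro by_letters[of "[]" "\<lambda>z. if z = a then 0 else 1" "[]"]) (use \<open>a \<noteq> b\<close> in simp_all)
  next
    assume u: "proj ?A u = [a, b, a]"
    let ?\<sigma> = "\<lambda>z. if z = a then [0::nat] else if z = b then [1, 1] else []"
    have "subst ?\<sigma> (proj ?A v) = [0, 1, 1, 0]"
      using transfer[of "[]" ?\<sigma> "[]"] u \<open>a \<noteq> b\<close> by simp
    then show ?thesis
      using aba_if_subst_0_11[OF \<open>a \<noteq> b\<close>, of "proj ?A v"] u by auto
  qed
qed

lemma two_letter_word_cases:
  assumes "x \<noteq> y" "set w \<subseteq> {x, y}" "hd w = x"
    and "occ w x \<in> {1, 2}" "occ w y \<in> {1, 2}" "\<not> (occ w x = 2 \<and> occ w y = 2)"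
  shows "w \<in> {[x, y], [x, y, y], [x, x, y], [x, y, x]}"
proof -
  have "length w = occ w x + occ w y"
    using assms(1,2) by (rule length_eq_occ_sum[rotated])
  with assms(4-6) have "length w = 2 \<or> length w = 3"
    by auto
  then consider c d where "w = [c, d]" | c d e where "w = [c, d, e]"
    by (auto simp: length_Suc_conv numeral_eq_Suc)
  then show ?thesis
    using assms by cases auto
qed

lemma proj_pattern_around_linear:
  assumes "x \<noteq> y" "occ u x = 2" "occ u y = 2" "occ u t = 1"
    and "occ_less u (y, 1) (t, 1)" "occ_less u (t, 1) (y, 2)" "occ_less u (x, 2) (t, 1)"
  shows "proj {y, t} u = [y, t, y]" and "proj {x, t} u = [x, x, t]"
proof -
  have "x \<noteq> t" "y \<noteq> t"
    using assms(2-4) by auto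
  obtain u1 u2 where u: "u = u1 @ t # u2" and "t \<notin> set u1"
    using split_list_first[of t u] occ_gt_0_iff[of u t] assms(4) by auto
  have "occ u1 t = 0" "occ u2 t = 0"
    using assms(4) \<open>t \<notin> set u1\<close> occ_gt_0_iff[of u1 t] unfolding u by simp_all
  have "occ u1 y = 1"
    using occ_less_linear[OF u \<open>t \<notin> set u1\<close> \<open>y \<noteq> t\<close>, of 1]
      occ_less_linear[OF u \<open>t \<notin> set u1\<close> \<open>y \<noteq> t\<close>, of 2] assms(3,5,6) by auto
  moreover have "occ u1 x = 2"
    using occ_less_linear[OF u \<open>t \<notin> set u1\<close> \<open>x \<noteq> t\<close>, of 2] assms(2,7) u by auto
  moreover have "occ u2 y = 1" "occ u2 x = 0"
    using calculation assms(2,3) \<open>x \<noteq> t\<close> \<open>y \<noteq> t\<close> unfolding u by auto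
  moreover have "proj {z, t} w = replicate (occ w z) z" if "occ w t = 0" for z w
    using that occ_gt_0_iff[of w t] by (intro proj_eq_replicate) auto
  ultimately show "proj {y, t} u = [y, t, y]" and "proj {x, t} u = [x, x, t]"
    using \<open>occ u1 t = 0\<close> \<open>occ u2 t = 0\<close> unfolding u by (simp_all add: numeral_2_eq_2)
qed

lemma proj_eq_yxxy:
  assumes "distinct [x, y, t]" and yt: "proj {y, t} w = [y, t, y]" and xt: "proj {x, t} w = [x, x, t]"
    and "hd (proj {x, y} w) \<noteq> x"
  shows "proj {x, y} w = [y, x, x, y]"
proof -
  have "t \<in> set w"
    using arg_cong[OF yt, of set] by auto
  then obtain w1 w2 where w: "w = w1 @ t # w2" and "t \<notin> set w1"
    by (meson split_list_first)
  have "[y] @ t # [y] = proj {y, t} w1 @ t # proj {y, t} w2"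
    using yt assms(1) unfolding w by simp
  then have "proj {y, t} w1 = [y]" "proj {y, t} w2 = [y]"
    using append_Cons_eq_iff[of t "[y]" "[y]"] assms(1) by auto
  moreover have "[x, x] @ t # [] = proj {x, t} w1 @ t # proj {x, t} w2"
    using xt assms(1) unfolding w by simp
  then have "proj {x, t} w1 = [x, x]" "proj {x, t} w2 = []"
    using append_Cons_eq_iff[of t "[x, x]" "[]"] assms(1) by auto
  ultimately have occ: "occ w1 x = 2" "occ w1 y = 1" "occ w2 x = 0" "occ w2 y = 1"
    using occ_proj[of "{x, t}" w1 x] occ_proj[of "{x, t}" w2 x] occ_proj[of "{y, t}" w1 y]
      occ_proj[of "{y, t}" w2 y] by simp_all
  have w2: "proj {x, y} w2 = [y]"
    using occ proj_eq_replicate[of y "{x, y}" w2] occ_gt_0_iff[of w2 x] by auto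
  have "x \<in> set (proj {x, y} w1)"
    using occ occ_gt_0_iff[of w1 x] by auto
  then have ne: "proj {x, y} w1 \<noteq> []"
    by force
  have "hd (proj {x, y} w1) \<in> {x, y}"
    using hd_in_set[OF ne] by simp
  moreover have "hd (proj {x, y} w1) \<noteq> x"
    using assms(1,4) ne unfolding w by (simp add: hd_append2)
  ultimately obtain r where w1: "proj {x, y} w1 = y # r"
    using ne by (metis insertE list.collapse singletonD)
  have "occ r x = 2" "occ r y = 0"
    using occ w1 occ_proj[of "{x, y}" w1 x] occ_proj[of "{x, y}" w1 y] assms(1) by auto
  moreover have "set r \<subseteq> {x, y}"
    using set_proj[of "{x, y}" w1] unfolding w1 by auto
  ultimately have "r = [x, x]"
    using proj_eq_replicate[of x "{x, y}" r] proj_id[of r "{x, y}"] occ_gt_0_iff[of r y]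
    by (auto simp: numeral_2_eq_2)
  then show ?thesis
    using w1 w2 assms(1) unfolding w by simp
qed

lemma first_occurrences_short_case:
  fixes S :: "'a::monoid_mult itself"
  assumes iso: "isoterm S [0, 1, 1, 0]" and sat: "satisfies S u v" and "x \<noteq> y"
    and "occ u x \<in> {1, 2}" "occ u y \<in> {1, 2}" "\<not> (occ u x = 2 \<and> occ u y = 2)"
    and hd_u: "hd (proj {x, y} u) = x"
  shows "occ v x = occ u x \<and> occ v y = occ u y \<and> hd (proj {x, y} v) = x"
proof -
  have "proj {x, y} u \<in> {[x, y], [x, y, y], [x, x, y], [x, y, x]}"
    using assms(3-7) by (intro two_letter_word_cases) (auto simp: occ_proj)
  then have "proj {x, y} v = proj {x, y} u"
    using proj_eq_if_rigid[OF iso sat \<open>x \<noteq> y\<close>] by blast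
  then show ?thesis
    using hd_u occ_proj[of "{x, y}" v x] occ_proj[of "{x, y}" u x] occ_proj[of "{x, y}" v y]
      occ_proj[of "{x, y}" u y] by simp
qed

lemma first_occurrences_long_case:
  fixes S :: "'a::monoid_mult itself"
  assumes iso: "isoterm S [0, 1, 1, 0]" and sat: "satisfies S u v" and "x \<noteq> y"
    and "occ u x = 2" "occ u y = 2" "occ u t = 1"
    and "occ_less u (y, 1) (t, 1)" "occ_less u (t, 1) (y, 2)" "occ_less u (x, 2) (t, 1)"
    and hd_u: "hd (proj {x, y} u) = x"
  shows "occ v x = 2 \<and> occ v y = 2 \<and> hd (proj {x, y} v) = x"
proof -
  have distinct: "distinct [x, y, t]"
    using assms(3-6) by auto
  have "proj {y, t} v = [y, t, y]" "proj {x, t} v = [x, x, t]"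
    using proj_eq_if_rigid[OF iso sat] proj_pattern_around_linear[OF assms(3-9)] distinct by auto
  then have "occ v y = 2" "occ v x = 2"
    using occ_proj[of "{y, t}" v y] occ_proj[of "{x, t}" v x] distinct by simp_all
  moreover have "hd (proj {x, y} v) = x"
  proof (rule ccontr)
    assume "hd (proj {x, y} v) \<noteq> x"
    with distinct \<open>proj {y, t} v = [y, t, y]\<close> \<open>proj {x, t} v = [x, x, t]\<close>
    have "proj {x, y} v = [y, x, x, y]"
      by (rule proj_eq_yxxy)
    then have "proj {y, x} v = [y, x, x, y]"
      by (simp add: insert_commute)
    then have "proj {y, x} u = [y, x, x, y]"
      using proj_eq_if_rigid[OF iso satisfies_sym[OF sat]] \<open>x \<noteq> y\<close> by (metis insertCI)
    with hd_u \<open>x \<noteq> y\<close> show False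
      by (simp add: insert_commute)
  qed
  ultimately show ?thesis
    by simp
qed

theorem lemma3p6:
  fixes S :: "'a::monoid_mult itself"
    and u :: word and x y :: nat
  assumes iso: "isoterm S [0, 1, 1, 0]"
    and uw: "is_word u"
    and xc: "x \<in> con u" and yc: "y \<in> con u" and xy: "x \<noteq> y"
    and i: "occ u x \<le> 2" "occ u y \<le> 2"
    and ii: "occ_less u (x, 1) (y, 1)"
    and iii: "occ u x = 2 \<and> occ u y = 2 \<longrightarrow>
              (\<exists>t. occ u t = 1 \<and>
                   occ_less u (y, 1) (t, 1) \<and> occ_less u (t, 1) (y, 2) \<and>
                   occ_less u (x, 2) (t, 1) \<and> occ_less u (t, 1) (y, 2))"
  shows "stable S u {(x, 1), (y, 1)}"
  unfolding stable_def
proof (intro allI impI)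
  fix v assume "is_word v \<and> satisfies S u v"
  then have sat: "satisfies S u v" ..
  have u_occ: "occ u x \<in> {1, 2}" "occ u y \<in> {1, 2}"
    using xc yc i occ_gt_0_iff[of u x] occ_gt_0_iff[of u y] by (auto simp: con_def)
  have hd_u: "hd (proj {x, y} u) = x"
    using ii occ_less_first_iff_hd_proj xy xc yc by (simp add: con_def)
  have v: "occ v x = occ u x \<and> occ v y = occ u y \<and> hd (proj {x, y} v) = x"
  proof (cases "occ u x = 2 \<and> occ u y = 2")
    case True
    with iii obtain t where "occ u t = 1" "occ_less u (y, 1) (t, 1)" "occ_less u (t, 1) (y, 2)"
      "occ_less u (x, 2) (t, 1)" by blast
    with True show ?thesis
      using first_occurrences_long_case[OF iso sat xy] hd_u by simp
  qed (use first_occurrences_short_case[OF iso sat xy u_occ _ hd_u] in blast)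
  moreover have "x \<in> set v" "y \<in> set v"
    using v u_occ by (auto simp: occ_gt_0_iff[symmetric])
  ultimately have "occ_less v (x, 1) (y, 1)"
    using occ_less_first_iff_hd_proj[OF xy] by blast
  then show "(\<forall>p\<in>{(x, 1), (y, 1)}. occ u (fst p) = occ v (fst p)) \<and>
      (\<forall>p\<in>{(x, 1), (y, 1)}. is_occurrence v p) \<and>
      (\<forall>p\<in>{(x, 1), (y, 1)}. \<forall>q\<in>{(x, 1), (y, 1)}. occ_less u p q \<longleftrightarrow> occ_less v p q)"
    using v u_occ ii by (auto simp: is_occurrence_def occ_less_def)
qed

end
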